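(* Let $P$ be the uniform distribution on $[0,1]$ and $\beta=\{\frac14,\frac12\}$. The conditional optimal set of five-points for $P$ with respect to $\beta$ is $\alpha_5=\{\frac1{12},\frac14,\frac12,\frac7{10},\frac9{10}\}$, with $V_5=\frac{613}{172800}$ ($\approx0.00354745$).
   Context: For a Borel probability measure $P$ on $\mathbb{R}$ and finite $\beta$ with $\mathrm{card}(\beta)=r$, for $n\ge r$, $V_n=\inf\{\int\min_{a\in\alpha\cup\beta}(x-a)^2dP(x):\mathrm{card}(\alpha)\le n-r\}$; a set $\alpha\cup\beta$ attaining the infimum, with each point of $\beta$ having a Voronoi region of positive $P$-measure, is a conditional optimal set of $n$-points with respect to $\beta$. *)

theory Defs
  imports "HOL-Probability.Probability"
begin

definition unif01 :: "real measure" where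
  "unif01 = uniform_measure lborel {0..1}"

definition distortion :: "real measure \<Rightarrow> real set \<Rightarrow> real" where
  "distortion P A = (\<integral>x. Min ((\<lambda>a. (x - a)^2) ` A) \<partial>P)"

text \<open>Conditional quantization error V_n with respect to beta (requires card beta \<le> n).\<close>
definition cond_V :: "real measure \<Rightarrow> real set \<Rightarrow> nat \<Rightarrow> real" where
  "cond_V P \<beta> n = (INF \<alpha> \<in> {\<alpha>. finite \<alpha> \<and> card \<alpha> \<le> n - card \<beta>}. distortion P (\<alpha> \<union> \<beta>))"

definition voronoi :: "real set \<Rightarrow> real \<Rightarrow> real set" where
  "voronoi S a = {x. \<forall>b\<in>S. \<bar>x - a\<bar> \<le> \<bar>x - b\<bar>}"

definition is_cond_optimal :: "real measure \<Rightarrow> real set \<Rightarrow> nat \<Rightarrow> real set \<Rightarrow> bool" where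
  "is_cond_optimal P \<beta> n S \<longleftrightarrow>
     finite \<beta> \<and> card \<beta> \<le> n \<and>
     (\<exists>\<alpha>. finite \<alpha> \<and> card \<alpha> \<le> n - card \<beta> \<and> S = \<alpha> \<union> \<beta>) \<and>
     distortion P S = cond_V P \<beta> n \<and>
     (\<forall>b\<in>\<beta>. measure P (voronoi S b) > 0)"

end

theory Submission
  imports Defs
begin

text \<open>
  Cutting [0,1] at the fixed centres 1/4 and 1/2 splits the distortion into three segments,
  each of which only sees the centres lying in it. On a segment of length L whose endpoint is a
  centre and which contains k further centres, the distortion is one third of a weighted sum of
  cubes of the half-gaps between consecutive centres and of the overhang at the far end; these
  2k+1 lengths add up to L, so the tangent-line inequality for x^3 bounds the sum below by
  L^3/(2k+1)^2, with equality only for equally spaced centres. With three free centres the only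
  configuration not already too expensive is one centre below 1/4 and two above 1/2, giving
  1/1728 + 1/768 + 1/600 = 613/172800 exactly at 1/12, 7/10 and 9/10.
\<close>

definition nearest_sqdist :: "real set \<Rightarrow> real \<Rightarrow> real" where
  "nearest_sqdist S x = Min ((\<lambda>a. (x - a)^2) ` S)"

lemma nearest_sqdist_singleton [simp]: "nearest_sqdist {a} = (\<lambda>x. (x - a)^2)"
  by (simp add: nearest_sqdist_def fun_eq_iff)

lemma nearest_sqdist_insert:
  "finite S \<Longrightarrow> S \<noteq> {} \<Longrightarrow> nearest_sqdist (insert a S) x = min ((x - a)^2) (nearest_sqdist S x)"
  by (simp add: nearest_sqdist_def)

lemma nearest_sqdist_nonneg: "finite S \<Longrightarrow> S \<noteq> {} \<Longrightarrow> 0 \<le> nearest_sqdist S x"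
  by (simp add: nearest_sqdist_def Min_ge_iff)

lemma continuous_on_nearest_sqdist:
  "finite S \<Longrightarrow> S \<noteq> {} \<Longrightarrow> continuous_on A (nearest_sqdist S)"
proof (induction S rule: finite_ne_induct)
  case (singleton a)
  then show ?case by (simp add: continuous_intros)
next
  case (insert a S)
  then show ?case by (simp add: nearest_sqdist_insert continuous_intros)
qed

lemma nearest_sqdist_eq_subset:
  assumes "finite S" "T \<subseteq> S" "T \<noteq> {}"
    and closer: "\<And>a. a \<in> S \<Longrightarrow> \<exists>b\<in>T. (x - b)^2 \<le> (x - a)^2"
  shows "nearest_sqdist S x = nearest_sqdist T x"
proof (rule antisym)
  have "finite T" using assms finite_subset by blast
  then show "nearest_sqdist S x \<le> nearest_sqdist T x"
    unfolding nearest_sqdist_def using assms by (intro Min_antimono) auto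
  have "nearest_sqdist S x \<in> (\<lambda>a. (x - a)^2) ` S"
    unfolding nearest_sqdist_def using assms by (intro Min_in) auto
  then obtain a where a: "a \<in> S" "nearest_sqdist S x = (x - a)^2" by auto
  with closer obtain b where b: "b \<in> T" "(x - b)^2 \<le> (x - a)^2" by blast
  have "nearest_sqdist T x \<le> (x - b)^2"
    unfolding nearest_sqdist_def using \<open>finite T\<close> b by (intro Min_le) auto
  with a b show "nearest_sqdist T x \<le> nearest_sqdist S x" by linarith
qed

lemma power2_diff_le_left_of_midpoint:
  fixes a b x :: real
  assumes "a \<le> b" "x \<le> (a + b) / 2"
  shows "(x - a)^2 \<le> (x - b)^2"
proof -
  have "(x - b)^2 - (x - a)^2 = (b - a) * (a + b - 2 * x)" by (simp add: power2_eq_square algebra_simps)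
  moreover have "0 \<le> (b - a) * (a + b - 2 * x)" using assms by simp
  ultimately show ?thesis by linarith
qed

lemma power2_diff_le_right_of_midpoint:
  fixes a b x :: real
  assumes "a \<le> b" "(a + b) / 2 \<le> x"
  shows "(x - b)^2 \<le> (x - a)^2"
  using power2_diff_le_left_of_midpoint[of "-b" "-a" "-x"] assms by (simp add: power2_commute)

lemma nearest_sqdist_restrict_atLeast:
  assumes "finite S" "c \<in> S" "c \<le> x"
  shows "nearest_sqdist S x = nearest_sqdist (S \<inter> {c..}) x"
proof (rule nearest_sqdist_eq_subset)
  fix a assume "a \<in> S"
  then show "\<exists>b\<in>S \<inter> {c..}. (x - b)^2 \<le> (x - a)^2"
  proof (cases "c \<le> a")
    case False
    then have "(x - c)^2 \<le> (x - a)^2"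
      using assms by (intro power2_diff_le_right_of_midpoint) auto
    with assms show ?thesis by blast
  qed auto
qed (use assms in auto)

lemma nearest_sqdist_restrict_atMost:
  assumes "finite S" "d \<in> S" "x \<le> d"
  shows "nearest_sqdist S x = nearest_sqdist (S \<inter> {..d}) x"
proof (rule nearest_sqdist_eq_subset)
  fix a assume "a \<in> S"
  then show "\<exists>b\<in>S \<inter> {..d}. (x - b)^2 \<le> (x - a)^2"
  proof (cases "a \<le> d")
    case False
    then have "(x - d)^2 \<le> (x - a)^2"
      using assms by (intro power2_diff_le_left_of_midpoint) auto
    with assms show ?thesis by blast
  qed auto
qed (use assms in auto)

lemma integral_nearest_sqdist_nonneg:
  "finite S \<Longrightarrow> S \<noteq> {} \<Longrightarrow> 0 \<le> integral {s..t} (nearest_sqdist S)"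
  by (intro integral_nonneg integrable_continuous_interval continuous_on_nearest_sqdist
      nearest_sqdist_nonneg)

lemma integral_nearest_sqdist_split:
  assumes "finite S" "c \<in> S" "d \<in> S" "s \<le> c" "c \<le> d" "d \<le> t"
  shows "integral {s..t} (nearest_sqdist S) =
      integral {s..c} (nearest_sqdist (insert c (S \<inter> {..<c})))
    + integral {c..d} (nearest_sqdist (insert c (insert d (S \<inter> {c<..<d}))))
    + integral {d..t} (nearest_sqdist (insert d (S \<inter> {d<..})))"
proof -
  have parts: "S \<inter> {..c} = insert c (S \<inter> {..<c})" "S \<inter> {d..} = insert d (S \<inter> {d<..})"
    "S \<inter> {c..d} = insert c (insert d (S \<inter> {c<..<d}))"
    using assms by auto
  have int: "nearest_sqdist S integrable_on {u..v}" for u v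
    using assms by (intro integrable_continuous_interval continuous_on_nearest_sqdist) auto
  have "integral {s..t} (nearest_sqdist S) =
      integral {s..c} (nearest_sqdist S) + integral {c..d} (nearest_sqdist S)
    + integral {d..t} (nearest_sqdist S)"
    using assms int by (simp add: Henstock_Kurzweil_Integration.integral_combine)
  also have "integral {s..c} (nearest_sqdist S) = integral {s..c} (nearest_sqdist (S \<inter> {..c}))"
    using assms by (intro integral_cong nearest_sqdist_restrict_atMost) auto
  also have "integral {c..d} (nearest_sqdist S) = integral {c..d} (nearest_sqdist (S \<inter> {c..d}))"
  proof (rule integral_cong)
    fix x assume "x \<in> {c..d}"
    then have "nearest_sqdist S x = nearest_sqdist (S \<inter> {c..} \<inter> {..d}) x"
      using assms nearest_sqdist_restrict_atLeast nearest_sqdist_restrict_atMost[of "S \<inter> {c..}" d x]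
      by auto
    also have "S \<inter> {c..} \<inter> {..d} = S \<inter> {c..d}" by auto
    finally show "nearest_sqdist S x = nearest_sqdist (S \<inter> {c..d}) x" .
  qed
  also have "integral {d..t} (nearest_sqdist S) = integral {d..t} (nearest_sqdist (S \<inter> {d..}))"
    using assms by (intro integral_cong nearest_sqdist_restrict_atLeast) auto
  finally show ?thesis using parts by simp
qed

lemma has_integral_power2_diff:
  fixes a s t :: real
  assumes "s \<le> t"
  shows "((\<lambda>x. (x - a)^2) has_integral ((a - s)^3 + (t - a)^3) / 3) {s..t}"
proof -
  have "((\<lambda>x. (x - a)^2) has_integral (t - a)^3 / 3 - (s - a)^3 / 3) {s..t}"
    by (rule fundamental_theorem_of_calculus[OF assms])
      (auto intro!: derivative_eq_intros
        simp: has_real_derivative_iff_has_vector_derivative[symmetric])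
  then show ?thesis
    by (rule has_integral_eq_rhs) (simp add: power3_eq_cube field_simps)
qed

lemma integral_power2_diff:
  fixes a s t :: real
  shows "s \<le> t \<Longrightarrow> integral {s..t} (\<lambda>x. (x - a)^2) = ((a - s)^3 + (t - a)^3) / 3"
  by (simp add: integral_unique[OF has_integral_power2_diff])

lemma has_integral_nearest_sqdist_pair:
  fixes a b s t :: real
  assumes "a \<le> b" "s \<le> (a + b) / 2" "(a + b) / 2 \<le> t"
  shows "(nearest_sqdist {a, b} has_integral ((a - s)^3 + 2 * ((b - a) / 2)^3 + (t - b)^3) / 3) {s..t}"
proof -
  let ?m = "(a + b) / 2"
  have half: "?m - a = (b - a) / 2" "b - ?m = (b - a) / 2" by (simp_all add: field_simps)
  have left: "((\<lambda>x. (x - a)^2) has_integral ((a - s)^3 + (?m - a)^3) / 3) {s..?m}"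
    and right: "((\<lambda>x. (x - b)^2) has_integral ((b - ?m)^3 + (t - b)^3) / 3) {?m..t}"
    by (intro has_integral_power2_diff assms(2,3))+
  have "(nearest_sqdist {a, b} has_integral ((a - s)^3 + (?m - a)^3) / 3 + ((b - ?m)^3 + (t - b)^3) / 3) {s..t}"
  proof (rule has_integral_combine[OF assms(2,3)])
    show "(nearest_sqdist {a, b} has_integral ((a - s)^3 + (?m - a)^3) / 3) {s..?m}"
      using power2_diff_le_left_of_midpoint[OF assms(1)]
      by (intro has_integral_eq[OF _ left]) (auto simp: nearest_sqdist_insert)
    show "(nearest_sqdist {a, b} has_integral ((b - ?m)^3 + (t - b)^3) / 3) {?m..t}"
      using power2_diff_le_right_of_midpoint[OF assms(1)]
      by (intro has_integral_eq[OF _ right]) (auto simp: nearest_sqdist_insert)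
  qed
  then show ?thesis
    by (rule has_integral_eq_rhs) (simp only: half, simp add: field_simps)
qed

lemma has_integral_nearest_sqdist_triple:
  fixes a b d s t :: real
  assumes "a \<le> b" "b \<le> d" "s \<le> (a + b) / 2" "(b + d) / 2 \<le> t"
  shows "(nearest_sqdist {a, b, d} has_integral
      ((a - s)^3 + 2 * ((b - a) / 2)^3 + 2 * ((d - b) / 2)^3 + (t - d)^3) / 3) {s..t}"
proof -
  let ?m = "(b + d) / 2"
  have half: "?m - b = (d - b) / 2" "d - ?m = (d - b) / 2" by (simp_all add: field_simps)
  have "s \<le> ?m" "(a + b) / 2 \<le> ?m" using assms by auto
  have left: "(nearest_sqdist {a, b} has_integral
      ((a - s)^3 + 2 * ((b - a) / 2)^3 + (?m - b)^3) / 3) {s..?m}"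
    using assms \<open>(a + b) / 2 \<le> ?m\<close> by (intro has_integral_nearest_sqdist_pair) auto
  have right: "((\<lambda>x. (x - d)^2) has_integral ((d - ?m)^3 + (t - d)^3) / 3) {?m..t}"
    using assms by (intro has_integral_power2_diff)
  have "(nearest_sqdist {a, b, d} has_integral
      ((a - s)^3 + 2 * ((b - a) / 2)^3 + (?m - b)^3) / 3 + ((d - ?m)^3 + (t - d)^3) / 3) {s..t}"
  proof (rule has_integral_combine[OF \<open>s \<le> ?m\<close> assms(4)])
    show "(nearest_sqdist {a, b, d} has_integral
        ((a - s)^3 + 2 * ((b - a) / 2)^3 + (?m - b)^3) / 3) {s..?m}"
      using power2_diff_le_left_of_midpoint[OF assms(2)]
      by (intro has_integral_eq[OF _ left]) (auto simp: nearest_sqdist_insert)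
    have "x \<in> {?m..t} \<Longrightarrow> (x - d)^2 \<le> (x - a)^2" for x
      using power2_diff_le_right_of_midpoint[of a d x] assms by auto
    then show "(nearest_sqdist {a, b, d} has_integral ((d - ?m)^3 + (t - d)^3) / 3) {?m..t}"
      using power2_diff_le_right_of_midpoint[OF assms(2)]
      by (intro has_integral_eq[OF _ right]) (auto simp: nearest_sqdist_insert)
  qed
  then show ?thesis
    by (rule has_integral_eq_rhs) (simp only: half, simp add: field_simps)
qed

text \<open>
  Tangent-line trick: x^3 - (3 m^2 x - 2 m^3) = (x - m)^2 (x + 2 m) is nonnegative for x \<ge> -2m.
  Here d is a half-gap between consecutive centres and u the overhang at the end of a segment.
\<close>

lemma cube_sum_lower_bound_3:
  fixes d u L :: real
  assumes "0 < d" "- d \<le> u" "2 * d + u = L"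
  shows "L^3 / 9 \<le> 2 * d^3 + u^3 \<and> (2 * d^3 + u^3 = L^3 / 9 \<longrightarrow> d = L / 3)"
proof (cases "- 2 * (L / 3) \<le> u")
  case True
  let ?m = "L / 3"
  have "0 \<le> ?m" using assms by simp
  have gap: "2 * d^3 + u^3 - L^3 / 9 = 2 * ((d - ?m)^2 * (d + 2 * ?m)) + (u - ?m)^2 * (u + 2 * ?m)"
    unfolding assms(3)[symmetric] by (simp add: power3_eq_cube power2_eq_square field_simps)
  have "0 \<le> (d - ?m)^2 * (d + 2 * ?m)" "0 \<le> (u - ?m)^2 * (u + 2 * ?m)"
    using True assms by auto
  moreover have "d = ?m" if "(d - ?m)^2 * (d + 2 * ?m) = 0"
    using that assms \<open>0 \<le> ?m\<close> by auto
  ultimately show ?thesis using gap by linarith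
next
  case False
  then have "0 \<le> - u" "- u \<le> d" "0 \<le> 2 * (L / 3)" "2 * (L / 3) < d" using assms by auto
  then have "(- u)^3 \<le> d^3" "(2 * (L / 3))^3 < d^3"
    by (simp_all only: power_mono power_strict_mono zero_less_numeral)
  moreover have "L^3 / 9 \<le> (2 * (L / 3))^3"
    using \<open>0 \<le> 2 * (L / 3)\<close> by (simp add: power_mult_distrib power_divide)
  moreover have "(- u)^3 = - (u^3)" by simp
  ultimately show ?thesis by (intro conjI impI) linarith+
qed

lemma cube_sum_lower_bound_5:
  fixes d1 d2 u L :: real
  assumes "0 < d1" "0 < d2" "- d2 \<le> u" "2 * d1 + 2 * d2 + u = L"
  shows "L^3 / 25 \<le> 2 * d1^3 + 2 * d2^3 + u^3
    \<and> (2 * d1^3 + 2 * d2^3 + u^3 = L^3 / 25 \<longrightarrow> d1 = L / 5 \<and> d2 = L / 5)"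
proof (cases "- 2 * (L / 5) \<le> u")
  case True
  let ?m = "L / 5"
  have "0 \<le> ?m" using assms by simp
  have gap: "2 * d1^3 + 2 * d2^3 + u^3 - L^3 / 25 = 2 * ((d1 - ?m)^2 * (d1 + 2 * ?m))
      + 2 * ((d2 - ?m)^2 * (d2 + 2 * ?m)) + (u - ?m)^2 * (u + 2 * ?m)"
    unfolding assms(4)[symmetric] by (simp add: power3_eq_cube power2_eq_square field_simps)
  have "0 \<le> (d1 - ?m)^2 * (d1 + 2 * ?m)" "0 \<le> (d2 - ?m)^2 * (d2 + 2 * ?m)"
    "0 \<le> (u - ?m)^2 * (u + 2 * ?m)"
    using True assms by auto
  moreover have "d = ?m" if "(d - ?m)^2 * (d + 2 * ?m) = 0" "0 < d" for d
    using that \<open>0 \<le> ?m\<close> by auto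
  ultimately show ?thesis using gap assms(1,2) by (smt (verit))
next
  case False
  then have "0 \<le> - u" "- u \<le> d2" "0 \<le> 2 * (L / 5)" "2 * (L / 5) < d2" using assms by auto
  then have "(- u)^3 \<le> d2^3" "(2 * (L / 5))^3 < d2^3"
    by (simp_all only: power_mono power_strict_mono zero_less_numeral)
  moreover have "L^3 / 25 \<le> (2 * (L / 5))^3"
    using \<open>0 \<le> 2 * (L / 5)\<close> by (simp add: power_mult_distrib power_divide)
  moreover have "(- u)^3 = - (u^3)" "0 \<le> d1^3" using assms by simp_all
  ultimately show ?thesis by (intro conjI impI) linarith+
qed

lemma integral_nearest_sqdist_left_pair_ge:
  fixes a c L :: real
  assumes "0 < L" "a < c"
  shows "L^3 / 27 \<le> integral {c - L..c} (nearest_sqdist {a, c})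
    \<and> (integral {c - L..c} (nearest_sqdist {a, c}) = L^3 / 27 \<longrightarrow> a = c - 2 * L / 3)"
proof (cases "(a + c) / 2 \<le> c - L")
  case True
  have "integral {c - L..c} (nearest_sqdist {a, c}) = integral {c - L..c} (nearest_sqdist {c})"
    using True power2_diff_le_right_of_midpoint[of a c] \<open>a < c\<close>
    by (intro integral_cong) (auto simp: nearest_sqdist_insert)
  also have "\<dots> = L^3 / 3" using assms by (simp add: integral_power2_diff)
  finally have "integral {c - L..c} (nearest_sqdist {a, c}) = L^3 / 3" .
  moreover have "0 < L^3" using assms by simp
  ultimately show ?thesis by (intro conjI impI) linarith+
next
  case False
  define d u where "d = (c - a) / 2" and "u = a - (c - L)"
  have I: "integral {c - L..c} (nearest_sqdist {a, c}) = (2 * d^3 + u^3) / 3"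
    using integral_unique[OF has_integral_nearest_sqdist_pair[of a c "c - L" c]] False assms
    unfolding d_def u_def by simp
  have "0 < d" "- d \<le> u" "2 * d + u = L"
    using False assms unfolding d_def u_def by (simp_all add: field_simps)
  then have bound: "L^3 / 9 \<le> 2 * d^3 + u^3 \<and> (2 * d^3 + u^3 = L^3 / 9 \<longrightarrow> d = L / 3)"
    by (rule cube_sum_lower_bound_3)
  show ?thesis
  proof (intro conjI impI)
    show "L^3 / 27 \<le> integral {c - L..c} (nearest_sqdist {a, c})" using I bound by auto
    assume "integral {c - L..c} (nearest_sqdist {a, c}) = L^3 / 27"
    with I bound have "d = L / 3" by auto
    then show "a = c - 2 * L / 3" unfolding d_def by auto
  qed
qed

lemma integral_nearest_sqdist_right_pair_ge:
  fixes c p L :: real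
  assumes "0 < L" "c < p"
  shows "L^3 / 27 \<le> integral {c..c + L} (nearest_sqdist {c, p})"
proof (cases "c + L \<le> (c + p) / 2")
  case True
  have "integral {c..c + L} (nearest_sqdist {c, p}) = integral {c..c + L} (nearest_sqdist {c})"
    using True power2_diff_le_left_of_midpoint[of c p] \<open>c < p\<close>
    by (intro integral_cong) (auto simp: nearest_sqdist_insert)
  also have "\<dots> = L^3 / 3" using assms by (simp add: integral_power2_diff)
  finally have "integral {c..c + L} (nearest_sqdist {c, p}) = L^3 / 3" .
  moreover have "0 < L^3" using assms by simp
  ultimately show ?thesis by linarith
next
  case False
  define d u where "d = (p - c) / 2" and "u = c + L - p"
  have "integral {c..c + L} (nearest_sqdist {c, p}) = (2 * d^3 + u^3) / 3"
    using integral_unique[OF has_integral_nearest_sqdist_pair[of c p c "c + L"]] False assms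
    unfolding d_def u_def by simp
  moreover have "0 < d" "- d \<le> u" "2 * d + u = L"
    using False assms unfolding d_def u_def by (simp_all add: field_simps)
  then have "L^3 / 9 \<le> 2 * d^3 + u^3"
    using cube_sum_lower_bound_3 by blast
  ultimately show ?thesis by simp
qed

lemma integral_nearest_sqdist_right_triple_ge:
  fixes c p q L :: real
  assumes "0 < L" "c < p" "p < q"
  shows "L^3 / 75 \<le> integral {c..c + L} (nearest_sqdist {c, p, q})
    \<and> (integral {c..c + L} (nearest_sqdist {c, p, q}) = L^3 / 75
        \<longrightarrow> p = c + 2 * L / 5 \<and> q = c + 4 * L / 5)"
proof (cases "c + L \<le> (p + q) / 2")
  case True
  have "integral {c..c + L} (nearest_sqdist {c, p, q}) = integral {c..c + L} (nearest_sqdist {c, p})"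
    using True power2_diff_le_left_of_midpoint[of p q] assms
    by (intro integral_cong) (auto simp: nearest_sqdist_insert)
  moreover have "L^3 / 27 \<le> integral {c..c + L} (nearest_sqdist {c, p})"
    using assms by (intro integral_nearest_sqdist_right_pair_ge)
  moreover have "0 < L^3" using assms by simp
  ultimately show ?thesis by (intro conjI impI) linarith+
next
  case False
  define d1 d2 u where "d1 = (p - c) / 2" and "d2 = (q - p) / 2" and "u = c + L - q"
  have I: "integral {c..c + L} (nearest_sqdist {c, p, q}) = (2 * d1^3 + 2 * d2^3 + u^3) / 3"
    using integral_unique[OF has_integral_nearest_sqdist_triple[of c p q c "c + L"]] False assms
    unfolding d1_def d2_def u_def by simp
  have "0 < d1" "0 < d2" "- d2 \<le> u" "2 * d1 + 2 * d2 + u = L"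
    using False assms unfolding d1_def d2_def u_def by (simp_all add: field_simps)
  then have bound: "L^3 / 25 \<le> 2 * d1^3 + 2 * d2^3 + u^3
      \<and> (2 * d1^3 + 2 * d2^3 + u^3 = L^3 / 25 \<longrightarrow> d1 = L / 5 \<and> d2 = L / 5)"
    by (rule cube_sum_lower_bound_5)
  show ?thesis
  proof (intro conjI impI)
    show "L^3 / 75 \<le> integral {c..c + L} (nearest_sqdist {c, p, q})" using I bound by auto
    assume "integral {c..c + L} (nearest_sqdist {c, p, q}) = L^3 / 75"
    with I bound have "d1 = L / 5" "d2 = L / 5" by auto
    then show "p = c + 2 * L / 5" "q = c + 4 * L / 5" unfolding d1_def d2_def by auto
  qed
qed

lemma integral_nearest_sqdist_right_card_le_1_ge:
  fixes A :: "real set"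
  assumes "0 < L" "finite A" "A \<subseteq> {c<..}" "card A \<le> 1"
  shows "L^3 / 27 \<le> integral {c..c + L} (nearest_sqdist (insert c A))"
proof (cases "A = {}")
  case True
  have "0 < L^3" using assms by simp
  then show ?thesis using True assms by (simp add: integral_power2_diff)
next
  case False
  with assms(2,4) have "card A = 1" by (simp add: le_Suc_eq)
  then obtain p where "A = {p}" by (rule card_1_singletonE)
  then show ?thesis using integral_nearest_sqdist_right_pair_ge[of L c p] assms by auto
qed

lemma integral_nearest_sqdist_left_card_1_ge:
  fixes A :: "real set"
  assumes "0 < L" "A \<subseteq> {..<c}" "card A = 1"
  shows "L^3 / 27 \<le> integral {c - L..c} (nearest_sqdist (insert c A))
    \<and> (integral {c - L..c} (nearest_sqdist (insert c A)) = L^3 / 27 \<longrightarrow> A = {c - 2 * L / 3})"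
proof -
  obtain a where "A = {a}" using assms(3) by (rule card_1_singletonE)
  moreover have "insert c {a} = {a, c}" by auto
  ultimately show ?thesis using integral_nearest_sqdist_left_pair_ge[of L a c] assms by auto
qed

lemma integral_nearest_sqdist_right_card_2_ge:
  fixes A :: "real set"
  assumes "0 < L" "A \<subseteq> {c<..}" "card A = 2"
  shows "L^3 / 75 \<le> integral {c..c + L} (nearest_sqdist (insert c A))
    \<and> (integral {c..c + L} (nearest_sqdist (insert c A)) = L^3 / 75
        \<longrightarrow> A = {c + 2 * L / 5, c + 4 * L / 5})"
proof -
  from assms(3) obtain x y where "A = {x, y}" "x \<noteq> y" by (auto simp: card_2_iff)
  then obtain p q where "A = {p, q}" "p < q"
    by (metis insert_commute linorder_neqE_linordered_idom)
  then show ?thesis using integral_nearest_sqdist_right_triple_ge[of L c p q] assms by auto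
qed

lemma card_split_at_two_points:
  fixes S :: "real set"
  assumes "finite S" "c \<in> S" "d \<in> S" "c < d"
  shows "card S = card (S \<inter> {..<c}) + card (S \<inter> {c<..<d}) + card (S \<inter> {d<..}) + 2"
proof -
  have disjoint: "(S \<inter> {..<c}) \<inter> (S \<inter> {c<..<d}) = {}"
    "((S \<inter> {..<c}) \<union> (S \<inter> {c<..<d})) \<inter> (S \<inter> {d<..}) = {}"
    "((S \<inter> {..<c}) \<union> (S \<inter> {c<..<d}) \<union> (S \<inter> {d<..})) \<inter> {c, d} = {}"
    using assms(4) by auto
  have "S = (S \<inter> {..<c}) \<union> (S \<inter> {c<..<d}) \<union> (S \<inter> {d<..}) \<union> {c, d}"
    using assms by auto
  then have "card S = card ((S \<inter> {..<c}) \<union> (S \<inter> {c<..<d}) \<union> (S \<inter> {d<..}) \<union> {c, d})"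
    by (rule arg_cong)
  also have "\<dots> = card (S \<inter> {..<c}) + card (S \<inter> {c<..<d}) + card (S \<inter> {d<..}) + 2"
    using assms(1,4) disjoint by (simp add: card_Un_disjoint)
  finally show ?thesis .
qed

lemma integral_nearest_sqdist_quarter_half_gt:
  fixes S :: "real set"
  assumes "finite S" "{1/4, 1/2} \<subseteq> S" "card (S \<inter> {1/2<..}) \<le> 1 \<or> S \<inter> {..<1/4} = {}"
  shows "613/172800 < integral {0..1} (nearest_sqdist S)"
proof -
  let ?IL = "integral {0..1/4} (nearest_sqdist (insert (1/4) (S \<inter> {..<1/4})))"
  let ?IM = "integral {1/4..1/2} (nearest_sqdist (insert (1/4) (insert (1/2) (S \<inter> {1/4<..<1/2}))))"
  let ?IR = "integral {1/2..1} (nearest_sqdist (insert (1/2) (S \<inter> {1/2<..})))"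
  have split: "integral {0..1} (nearest_sqdist S) = ?IL + ?IM + ?IR"
    using assms by (intro integral_nearest_sqdist_split) auto
  have "0 \<le> ?IL" "0 \<le> ?IM" "0 \<le> ?IR"
    using assms(1) by (simp_all add: integral_nearest_sqdist_nonneg)
  moreover have "1/216 \<le> ?IR \<or> ?IL = 1/192"
  proof (cases "S \<inter> {..<1/4} = {}")
    case False
    with assms(3) have "card (S \<inter> {1/2<..}) \<le> 1" by blast
    then show ?thesis
      using integral_nearest_sqdist_right_card_le_1_ge[of "1/2" "S \<inter> {1/2<..}" "1/2"] assms(1)
      by (simp add: power_divide)
  qed (simp add: integral_power2_diff power_divide)
  ultimately show ?thesis using split by (elim disjE) linarith+
qed

lemma integral_nearest_sqdist_quarter_half_tight:
  fixes S :: "real set"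
  assumes "finite S" "{1/4, 1/2} \<subseteq> S" "card (S \<inter> {..<1/4}) = 1"
    "S \<inter> {1/4<..<1/2} = {}" "card (S \<inter> {1/2<..}) = 2"
  shows "613/172800 \<le> integral {0..1} (nearest_sqdist S)
    \<and> (integral {0..1} (nearest_sqdist S) = 613/172800 \<longrightarrow> S = {1/12, 1/4, 1/2, 7/10, 9/10})"
proof -
  let ?AL = "S \<inter> {..<1/4}" and ?AR = "S \<inter> {1/2<..}"
  let ?IL = "integral {0..1/4} (nearest_sqdist (insert (1/4) ?AL))"
  let ?IR = "integral {1/2..1} (nearest_sqdist (insert (1/2) ?AR))"
  have "integral {1/4..1/2} (nearest_sqdist {1/4, 1/2}) = 1/768"
    using integral_unique[OF has_integral_nearest_sqdist_pair[of "1/4" "1/2" "1/4" "1/2"]]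
    by (simp add: power_divide)
  then have split: "integral {0..1} (nearest_sqdist S) = ?IL + 1/768 + ?IR"
    using integral_nearest_sqdist_split[of S "1/4" "1/2" 0 1] assms by simp
  have L: "1/1728 \<le> ?IL \<and> (?IL = 1/1728 \<longrightarrow> ?AL = {1/12})"
    using integral_nearest_sqdist_left_card_1_ge[of "1/4" ?AL "1/4"] assms(3)
    by (simp add: power_divide)
  have R: "1/600 \<le> ?IR \<and> (?IR = 1/600 \<longrightarrow> ?AR = {7/10, 9/10})"
    using integral_nearest_sqdist_right_card_2_ge[of "1/2" ?AR "1/2"] assms(5)
    by (simp add: power_divide)
  show ?thesis
  proof (intro conjI impI)
    show "613/172800 \<le> integral {0..1} (nearest_sqdist S)" using split L R by linarith
    assume "integral {0..1} (nearest_sqdist S) = 613/172800"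
    then have "?IL = 1/1728" "?IR = 1/600" using split L R by linarith+
    then have "?AL = {1/12}" "?AR = {7/10, 9/10}" using L R by auto
    moreover have "S = ?AL \<union> (S \<inter> {1/4<..<1/2}) \<union> ?AR \<union> {1/4, 1/2}" using assms(2) by auto
    ultimately show "S = {1/12, 1/4, 1/2, 7/10, 9/10}" using assms(4) by auto
  qed
qed

lemma integral_nearest_sqdist_quarter_half_ge:
  fixes S :: "real set"
  assumes "finite S" "{1/4, 1/2} \<subseteq> S" "card S \<le> 5"
  shows "613/172800 \<le> integral {0..1} (nearest_sqdist S)
    \<and> (integral {0..1} (nearest_sqdist S) = 613/172800 \<longrightarrow> S = {1/12, 1/4, 1/2, 7/10, 9/10})"
proof (cases "card (S \<inter> {1/2<..}) \<le> 1 \<or> S \<inter> {..<1/4} = {}")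
  case True
  then have "613/172800 < integral {0..1} (nearest_sqdist S)"
    by (rule integral_nearest_sqdist_quarter_half_gt[OF assms(1,2)])
  then show ?thesis by simp
next
  case False
  have "card (S \<inter> {..<1/4}) + card (S \<inter> {1/4<..<1/2}) + card (S \<inter> {1/2<..}) \<le> 3"
    using card_split_at_two_points[of S "1/4" "1/2"] assms by simp
  moreover have "card (S \<inter> {..<1/4}) \<noteq> 0" using False assms(1) by simp
  ultimately have "card (S \<inter> {..<1/4}) = 1" "card (S \<inter> {1/4<..<1/2}) = 0"
    "card (S \<inter> {1/2<..}) = 2"
    using False by linarith+
  then show ?thesis using integral_nearest_sqdist_quarter_half_tight assms by simp
qed

lemma lebesgue_integral_unif01:
  fixes f :: "real \<Rightarrow> real"
  assumes "continuous_on UNIV f"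
  shows "(\<integral>x. f x \<partial>unif01) = integral {0..1} f"
proof -
  have unif01: "unif01 = density lborel (\<lambda>x. ennreal (indicator {0..1::real} x))"
    unfolding unif01_def uniform_measure_def
    by (auto intro!: arg_cong[where f="density lborel"] simp: indicator_def)
  have "(\<integral>x. f x \<partial>unif01) = (\<integral>x. indicator {0..1::real} x *\<^sub>R f x \<partial>lborel)"
    unfolding unif01 using assms by (intro integral_density) (auto simp: borel_measurable_continuous_onI)
  also have "\<dots> = (LINT x : {0..1} | lborel. f x)"
    by (simp add: set_lebesgue_integral_def)
  also have "\<dots> = integral {0..1} f"
    using continuous_on_subset[OF assms]
    by (intro set_borel_integral_eq_integral(2) borel_integrable_atLeastAtMost') auto
  finally show ?thesis .
qed

lemma distortion_unif01:
  "finite S \<Longrightarrow> S \<noteq> {} \<Longrightarrow> distortion unif01 S = integral {0..1} (nearest_sqdist S)"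
  unfolding distortion_def nearest_sqdist_def[symmetric]
  by (intro lebesgue_integral_unif01 continuous_on_nearest_sqdist)

lemma distortion_unif01_optimal_set:
  "distortion unif01 {1/12, 1/4, 1/2, 7/10, 9/10} = 613/172800"
proof -
  let ?S = "{1/12, 1/4, 1/2, 7/10, 9/10 :: real}"
  have "insert (1/4) (?S \<inter> {..<1/4}) = {1/12, 1/4}"
    "insert (1/4) (insert (1/2) (?S \<inter> {1/4<..<1/2})) = {1/4, 1/2}"
    "insert (1/2) (?S \<inter> {1/2<..}) = {1/2, 7/10, 9/10}"
    by auto
  then have "integral {0..1} (nearest_sqdist ?S) = integral {0..1/4} (nearest_sqdist {1/12, 1/4})
      + integral {1/4..1/2} (nearest_sqdist {1/4, 1/2}) + integral {1/2..1} (nearest_sqdist {1/2, 7/10, 9/10})"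
    using integral_nearest_sqdist_split[of ?S "1/4" "1/2" 0 1] by simp
  also have "\<dots> = 1/1728 + 1/768 + 1/600"
    using integral_unique[OF has_integral_nearest_sqdist_pair[of "1/12" "1/4" 0 "1/4"]]
      integral_unique[OF has_integral_nearest_sqdist_pair[of "1/4" "1/2" "1/4" "1/2"]]
      integral_unique[OF has_integral_nearest_sqdist_triple[of "1/2" "7/10" "9/10" "1/2" 1]]
    by (simp add: power_divide)
  finally show ?thesis by (simp add: distortion_unif01)
qed

lemma distortion_unif01_ge:
  fixes \<alpha> :: "real set"
  assumes "finite \<alpha>" "card \<alpha> \<le> 3"
  shows "613/172800 \<le> distortion unif01 (\<alpha> \<union> {1/4, 1/2})
    \<and> (distortion unif01 (\<alpha> \<union> {1/4, 1/2}) = 613/172800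
        \<longrightarrow> \<alpha> \<union> {1/4, 1/2} = {1/12, 1/4, 1/2, 7/10, 9/10})"
proof -
  have "card (\<alpha> \<union> {1/4, 1/2}) \<le> 5"
    using card_Un_le[of \<alpha> "{1/4, 1/2}"] assms(2) by simp
  then show ?thesis
    using integral_nearest_sqdist_quarter_half_ge[of "\<alpha> \<union> {1/4, 1/2}"] assms(1)
    by (simp add: distortion_unif01)
qed

lemma cond_V_unif01:
  "cond_V unif01 {1/4, 1/2} 5 = 613/172800"
  unfolding cond_V_def
proof (rule cInf_eq_minimum)
  show "613/172800 \<in> (\<lambda>\<alpha>. distortion unif01 (\<alpha> \<union> {1/4, 1/2}))
      ` {\<alpha>. finite \<alpha> \<and> card \<alpha> \<le> 5 - card {1/4, 1/2 :: real}}"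
    using distortion_unif01_optimal_set
    by (intro image_eqI[of _ _ "{1/12, 7/10, 9/10}"]) (auto simp: insert_commute)
  fix v assume "v \<in> (\<lambda>\<alpha>. distortion unif01 (\<alpha> \<union> {1/4, 1/2}))
      ` {\<alpha>. finite \<alpha> \<and> card \<alpha> \<le> 5 - card {1/4, 1/2 :: real}}"
  then show "613/172800 \<le> v" using distortion_unif01_ge by auto
qed

lemma measure_unif01_interval:
  assumes "0 \<le> u" "u \<le> v" "v \<le> 1"
  shows "measure unif01 {u..v} = v - u"
proof -
  have "measure unif01 {u..v} = measure lborel ({0..1} \<inter> {u..v}) / measure lborel {0..1::real}"
    unfolding unif01_def by (rule measure_uniform_measure) auto
  also have "{0..1} \<inter> {u..v} = {u..v}" using assms by auto
  finally show ?thesis using assms by simp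
qed

theorem proposition3p4:
  shows "is_cond_optimal unif01 {1/4, 1/2} 5 {1/12, 1/4, 1/2, 7/10, 9/10}
     \<and> (\<forall>S. is_cond_optimal unif01 {1/4, 1/2} 5 S \<longrightarrow> S = {1/12, 1/4, 1/2, 7/10, 9/10})
     \<and> cond_V unif01 {1/4, 1/2} 5 = 613/172800"
proof (intro conjI allI impI cond_V_unif01)
  have "voronoi {1/12, 1/4, 1/2, 7/10, 9/10} (1/4) = {1/6..3/8}"
    "voronoi {1/12, 1/4, 1/2, 7/10, 9/10} (1/2) = {3/8..3/5}"
    unfolding voronoi_def by (auto simp: abs_if)
  then have "\<forall>b\<in>{1/4, 1/2}. 0 < measure unif01 (voronoi {1/12, 1/4, 1/2, 7/10, 9/10} b)"
    by (simp add: measure_unif01_interval)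
  then show "is_cond_optimal unif01 {1/4, 1/2} 5 {1/12, 1/4, 1/2, 7/10, 9/10}"
    unfolding is_cond_optimal_def
    using distortion_unif01_optimal_set cond_V_unif01
    by (auto intro!: exI[of _ "{1/12, 7/10, 9/10}"])
next
  fix S assume "is_cond_optimal unif01 {1/4, 1/2} 5 S"
  then obtain \<alpha> where "finite \<alpha>" "card \<alpha> \<le> 3" "S = \<alpha> \<union> {1/4, 1/2}"
    and "distortion unif01 S = 613/172800"
    unfolding is_cond_optimal_def cond_V_unif01 by auto
  then show "S = {1/12, 1/4, 1/2, 7/10, 9/10}" using distortion_unif01_ge by blast
qed

end
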